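(* Let $f:\mathbb{R}^n\to\mathbb{R}^n$ be smooth, $N\ge2$, and $A$ a real symmetric $n\times n$ matrix with $A\succ0$, and consider $$\dot{x}_i=f(x_i)+A(x_{i-1}-x_i),\qquad i=1,\dots,N,$$ indices modulo $N$. If there is $\lambda>0$ with $(J_f(z))_s+A\preceq-\lambda I$ for all $z\in\mathbb{R}^n$, then for every initial condition $\|x_i(t)-x_j(t)\|\to0$ exponentially as $t\to\infty$ for all $i,j$.
   Context: $J_f(z)=\frac{\partial f}{\partial z}(z)$ is the Jacobian of $f$. For a square matrix $M$, $M_s=\tfrac12(M+M^T)$. $M\succ0$ means positive definite; $M\preceq N$ means $N-M$ is positive semidefinite. *)

theory Defs
  imports "HOL-Analysis.Analysis"
begin

text \<open>C-infinity real-valued functions on R^n: differentiable everywhere and every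
  partial derivative is again C-infinity (coinductively, i.e. to all orders).\<close>
coinductive smooth_real :: "(real^'n \<Rightarrow> real) \<Rightarrow> bool" where
  "(\<forall>x. g differentiable (at x)) \<Longrightarrow>
   (\<forall>i. smooth_real (\<lambda>x. frechet_derivative g (at x) (axis i 1))) \<Longrightarrow> smooth_real g"

definition smooth_map :: "(real^'n \<Rightarrow> real^'m) \<Rightarrow> bool" where
  "smooth_map f \<longleftrightarrow> (\<forall>i. smooth_real (\<lambda>x. f x $ i))"

definition jacobian :: "(real^'n \<Rightarrow> real^'m) \<Rightarrow> real^'n \<Rightarrow> real^'n^'m" where
  "jacobian f z = (\<chi> i j. frechet_derivative f (at z) (axis j 1) $ i)"

definition sym_part :: "real^'n^'n \<Rightarrow> real^'n^'n" where
  "sym_part M = (1/2) *\<^sub>R (M + transpose M)"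

definition psd :: "real^'n^'n \<Rightarrow> bool" where
  "psd M \<longleftrightarrow> (\<forall>v. 0 \<le> v \<bullet> (M *v v))"

definition pos_def :: "real^'n^'n \<Rightarrow> bool" where
  "pos_def M \<longleftrightarrow> (\<forall>v. v \<noteq> 0 \<longrightarrow> 0 < v \<bullet> (M *v v))"

definition loewner_le :: "real^'n^'n \<Rightarrow> real^'n^'n \<Rightarrow> bool" where
  "loewner_le M N \<longleftrightarrow> psd (N - M)"

end

theory Submission
  imports Defs
begin

text \<open>The Lyapunov function is the total disagreement
  \<open>W = \<Sum>\<^sub>i\<^sub>,\<^sub>j \<parallel>x\<^sub>i - x\<^sub>j\<parallel>\<^sup>2\<close>. Integrating the Jacobian bound along segments makes \<open>f\<close>
  strongly monotone with constant \<open>\<lambda>\<close>, which contributes \<open>-2\<lambda>W\<close> to \<open>W'\<close>. With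
  \<open>d\<^sub>i\<^sub>j = x\<^sub>i - x\<^sub>j\<close> and \<open>p\<close> the cyclic predecessor, the coupling contributes
  \<open>\<Sum>\<^sub>i\<^sub>,\<^sub>j 2\<langle>d\<^sub>i\<^sub>j, A d\<^sub>p\<^sub>(\<^sub>i\<^sub>)\<^sub>p\<^sub>(\<^sub>j\<^sub>)\<rangle> - 2\<langle>d\<^sub>i\<^sub>j, A d\<^sub>i\<^sub>j\<rangle>\<close>; since \<open>2\<langle>a, A b\<rangle> \<le> \<langle>a, A a\<rangle> + \<langle>b, A b\<rangle>\<close>
  for the positive semidefinite \<open>A\<close> and \<open>p\<close> permutes the agents, this is \<open>\<le> 0\<close>. Hence
  \<open>W' \<le> -2\<lambda>W\<close>, so \<open>W\<close>, and with it every \<open>\<parallel>x\<^sub>i - x\<^sub>j\<parallel>\<close>, decays exponentially.\<close>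

lemma pos_def_imp_psd: "pos_def M \<Longrightarrow> psd M"
  unfolding pos_def_def psd_def by (metis inner_zero_left order_less_imp_le order_refl)

lemma smooth_map_differentiable:
  fixes f :: "real^'n \<Rightarrow> real^'m"
  assumes "smooth_map f"
  shows "f differentiable (at z)"
proof -
  have "(\<lambda>x. f x $ i) differentiable (at z)" for i
    using assms unfolding smooth_map_def by (metis smooth_real.cases)
  then show ?thesis
    by (subst differentiable_componentwise_within) (auto simp: Basis_vec_def inner_axis)
qed

lemma jacobian_mult_vector:
  fixes f :: "real^'n \<Rightarrow> real^'m"
  assumes "(f has_derivative f') (at z)"
  shows "jacobian f z *v v = f' v"
proof -
  have "jacobian f z = matrix f'"
    using frechet_derivative_at[OF assms] unfolding jacobian_def matrix_def by simp
  then show ?thesis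
    using has_derivative_linear[OF assms] by (simp add: matrix_works)
qed

lemma quadratic_form_transpose:
  fixes M :: "real^'n^'n"
  shows "v \<bullet> (transpose M *v v) = v \<bullet> (M *v v)"
  by (simp add: dot_lmul_matrix[symmetric] inner_commute)

lemma quadratic_form_sym_part: "v \<bullet> (sym_part M *v v) = v \<bullet> (M *v v)"
  unfolding sym_part_def scaleR_matrix_vector_assoc[symmetric] matrix_vector_mult_add_rdistrib
    inner_scaleR_right inner_add_right quadratic_form_transpose
  by simp

lemma loewner_le_neg_scaled_imp_inner_le:
  fixes J A :: "real^'n^'n"
  assumes "loewner_le (sym_part J + A) ((- lam) *\<^sub>R mat 1)" and "psd A"
  shows "v \<bullet> (J *v v) \<le> - lam * norm v ^ 2"
proof -
  have "((- lam) *\<^sub>R mat 1) *v v = (- lam) *\<^sub>R v"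
    by (metis matrix_vector_mul_lid scaleR_matrix_vector_assoc)
  then have "v \<bullet> (((- lam) *\<^sub>R mat 1 - (sym_part J + A)) *v v)
      = - lam * norm v ^ 2 - v \<bullet> (J *v v) - v \<bullet> (A *v v)"
    unfolding matrix_vector_mult_diff_rdistrib matrix_vector_mult_add_rdistrib
      inner_diff_right inner_add_right quadratic_form_sym_part
    by (simp add: power2_norm_eq_inner)
  moreover have "0 \<le> v \<bullet> (((- lam) *\<^sub>R mat 1 - (sym_part J + A)) *v v)"
    using assms(1) unfolding loewner_le_def psd_def by blast
  moreover have "0 \<le> v \<bullet> (A *v v)"
    using assms(2) unfolding psd_def by blast
  ultimately show ?thesis
    by linarith
qed

text \<open>The one-sided Lipschitz (strong monotonicity) estimate follows by differentiating
  \<open>s \<mapsto> \<langle>d, f (b + s d)\<rangle> + \<lambda> \<parallel>d\<parallel>\<^sup>2 s\<close>, which is nonincreasing on \<open>[0, 1]\<close>.\<close>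
lemma strongly_monotone_if_derivative_inner_le:
  fixes f :: "'a::real_inner \<Rightarrow> 'a"
  assumes der: "\<And>z. (f has_derivative F z) (at z)"
    and inner_le: "\<And>z v. v \<bullet> F z v \<le> - lam * norm v ^ 2"
  shows "(a - b) \<bullet> (f a - f b) \<le> - lam * norm (a - b) ^ 2"
proof -
  define d where "d = a - b"
  define h where "h s = d \<bullet> f (b + s *\<^sub>R d) + lam * norm d ^ 2 * s" for s :: real
  have hd: "(h has_real_derivative (d \<bullet> F (b + s *\<^sub>R d) d + lam * norm d ^ 2)) (at s)" for s
  proof -
    have "((\<lambda>s. b + s *\<^sub>R d) has_derivative (\<lambda>u. u *\<^sub>R d)) (at s)"
      by (auto intro!: derivative_eq_intros)
    from has_derivative_compose[OF this der]
    have "((\<lambda>s. f (b + s *\<^sub>R d)) has_derivative (\<lambda>u. F (b + s *\<^sub>R d) (u *\<^sub>R d))) (at s)"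
      by (simp add: o_def)
    then have "(h has_derivative (\<lambda>u. d \<bullet> F (b + s *\<^sub>R d) (u *\<^sub>R d) + u * (lam * norm d ^ 2)))
        (at s)"
      unfolding h_def by (auto intro!: derivative_eq_intros)
    moreover have "(\<lambda>u. d \<bullet> F (b + s *\<^sub>R d) (u *\<^sub>R d) + u * (lam * norm d ^ 2))
        = (*) (d \<bullet> F (b + s *\<^sub>R d) d + lam * norm d ^ 2)"
      using linear_cmul[OF has_derivative_linear[OF der]] by (auto simp: algebra_simps)
    ultimately show ?thesis
      unfolding has_field_derivative_def by simp
  qed
  have "h 1 \<le> h 0"
  proof (rule DERIV_nonpos_imp_nonincreasing[of 0 1 h])
    fix s :: real
    show "\<exists>y. (h has_real_derivative y) (at s) \<and> y \<le> 0"
      using hd[of s] inner_le[of d "b + s *\<^sub>R d"] by auto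
  qed simp
  then show ?thesis
    unfolding h_def d_def by (simp add: inner_diff_right)
qed

lemma strongly_monotone_if_loewner_le:
  fixes f :: "real^'n \<Rightarrow> real^'n"
  assumes "\<And>z. f differentiable (at z)"
    and "\<And>z. loewner_le (sym_part (jacobian f z) + A) ((- lam) *\<^sub>R mat 1)" and "psd A"
  shows "(a - b) \<bullet> (f a - f b) \<le> - lam * norm (a - b) ^ 2"
proof -
  have der: "(f has_derivative frechet_derivative f (at z)) (at z)" for z
    using assms(1) frechet_derivative_works by blast
  show ?thesis
  proof (rule strongly_monotone_if_derivative_inner_le[OF der])
    fix z v
    show "v \<bullet> frechet_derivative f (at z) v \<le> - lam * norm v ^ 2"
      using loewner_le_neg_scaled_imp_inner_le[OF assms(2,3)]
      by (simp add: jacobian_mult_vector[OF der, symmetric])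
  qed
qed

lemma psd_symmetric_bilinear_le:
  fixes A :: "real^'n^'n"
  assumes "transpose A = A" "psd A"
  shows "a \<bullet> (A *v b) \<le> (a \<bullet> (A *v a) + b \<bullet> (A *v b)) / 2"
proof -
  have "0 \<le> (a - b) \<bullet> (A *v (a - b))"
    using assms(2) unfolding psd_def by blast
  moreover have "b \<bullet> (A *v a) = a \<bullet> (A *v b)"
    by (metis assms(1) dot_lmul_matrix inner_commute transpose_matrix_vector)
  ultimately show ?thesis
    by (simp add: matrix_vector_mult_diff_distrib inner_diff_left inner_diff_right)
qed

lemma bij_betw_cyclic_predecessor:
  assumes "N \<ge> (1::nat)"
  shows "bij_betw (\<lambda>i. (i + N - 1) mod N) {..<N} {..<N}"
proof -
  have pred: "(i + N - 1) mod N = (if i = 0 then N - 1 else i - 1)" if "i < N" for i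
  proof (cases "i = 0")
    case False
    then have "(i + N - 1) mod N = (i - 1 + N) mod N"
      by (simp add: Suc_leI)
    also have "\<dots> = i - 1"
      using that by simp
    finally show ?thesis
      using False by simp
  qed (use assms in simp)
  have "inj_on (\<lambda>i. (i + N - 1) mod N) {..<N}"
  proof (rule inj_onI)
    fix i j assume "i \<in> {..<N}" "j \<in> {..<N}" "(i + N - 1) mod N = (j + N - 1) mod N"
    then show "i = j"
      using pred[of i] pred[of j] by (auto split: if_splits)
  qed
  moreover have "(\<lambda>i. (i + N - 1) mod N) ` {..<N} \<subseteq> {..<N}"
    using assms by auto
  ultimately show ?thesis
    by (simp add: bij_betw_def endo_inj_surj)
qed

lemma sum_sum_reindex_bij_betw:
  assumes "bij_betw p S S"
  shows "(\<Sum>i\<in>S. \<Sum>j\<in>S. g (p i) (p j)) = (\<Sum>i\<in>S. \<Sum>j\<in>S. g i j)"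
  using sum.reindex_bij_betw[OF assms, of "\<lambda>i. \<Sum>j\<in>S. g i j"]
    sum.reindex_bij_betw[OF assms, of "g (p _)"] by simp

lemma exp_decay_if_derivative_le:
  fixes W W' :: "real \<Rightarrow> real"
  assumes der: "\<And>t. t \<ge> 0 \<Longrightarrow> (W has_real_derivative W' t) (at t within {0..})"
    and le: "\<And>t. t \<ge> 0 \<Longrightarrow> W' t \<le> - c * W t"
    and "t \<ge> 0"
  shows "W t \<le> W 0 * exp (- c * t)"
proof -
  define h where "h s = W s * exp (c * s)" for s
  have hd: "(h has_real_derivative ((W' s + c * W s) * exp (c * s))) (at s within {0..})"
    if "s \<ge> 0" for s
    unfolding h_def using der[OF that] by (auto intro!: derivative_eq_intros simp: algebra_simps)
  have "h t \<le> h 0"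
  proof (rule DERIV_nonpos_imp_decreasing_open[OF \<open>t \<ge> 0\<close>])
    fix s :: real assume s: "0 < s" "s < t"
    then have "at s within {0..} = at s"
      by (intro at_within_interior) auto
    then show "\<exists>y. (h has_real_derivative y) (at s) \<and> y \<le> 0"
      using hd[of s] le[of s] s by (auto intro!: mult_nonpos_nonneg)
  next
    have "continuous_on {0..} h"
      using hd by (intro continuous_on_eq_continuous_within[THEN iffD2] ballI)
        (auto intro: DERIV_continuous)
    then show "continuous_on {0..t} h"
      by (rule continuous_on_subset) auto
  qed
  then have "W t * exp (c * t) * exp (- c * t) \<le> W 0 * exp (- c * t)"
    unfolding h_def by (simp add: mult_right_mono)
  then show ?thesis
    by (simp add: mult.assoc exp_add[symmetric])
qed

definition disagreement :: "nat \<Rightarrow> (nat \<Rightarrow> 'a::real_normed_vector) \<Rightarrow> real" where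
  "disagreement N y = (\<Sum>i<N. \<Sum>j<N. norm (y i - y j) ^ 2)"

lemma norm_diff_sq_le_disagreement:
  assumes "i < N" "j < N"
  shows "norm (y i - y j) ^ 2 \<le> disagreement N y"
proof -
  have "norm (y i - y j) ^ 2 \<le> (\<Sum>j'<N. norm (y i - y j') ^ 2)"
    using assms by (intro member_le_sum) auto
  also have "\<dots> \<le> disagreement N y"
    unfolding disagreement_def using assms
    by (intro member_le_sum[of i _ "\<lambda>i. \<Sum>j'<N. norm (y i - y j') ^ 2"]) (auto intro: sum_nonneg)
  finally show ?thesis .
qed

lemma has_real_derivative_disagreement:
  fixes x :: "real \<Rightarrow> nat \<Rightarrow> 'a::real_inner"
  assumes "\<And>i. i < N \<Longrightarrow> ((\<lambda>s. x s i) has_vector_derivative v i) (at t within S)"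
  shows "((\<lambda>s. disagreement N (x s)) has_real_derivative
           2 * (\<Sum>i<N. \<Sum>j<N. (x t i - x t j) \<bullet> (v i - v j))) (at t within S)"
proof -
  have "((\<lambda>s. norm (x s i - x s j) ^ 2) has_real_derivative
          2 * ((x t i - x t j) \<bullet> (v i - v j))) (at t within S)" if "i < N" "j < N" for i j
  proof -
    have "((\<lambda>s. x s i - x s j) has_derivative (\<lambda>u. u *\<^sub>R (v i - v j))) (at t within S)"
      using has_vector_derivative_diff[OF assms[OF \<open>i < N\<close>] assms[OF \<open>j < N\<close>]]
      unfolding has_vector_derivative_def .
    from has_derivative_inner[OF this this]
    have "((\<lambda>s. (x s i - x s j) \<bullet> (x s i - x s j)) has_derivative
        (\<lambda>u. (x t i - x t j) \<bullet> (u *\<^sub>R (v i - v j)) + (u *\<^sub>R (v i - v j)) \<bullet> (x t i - x t j)))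
        (at t within S)" .
    moreover have "(\<lambda>u. (x t i - x t j) \<bullet> (u *\<^sub>R (v i - v j)) + (u *\<^sub>R (v i - v j)) \<bullet> (x t i - x t j))
        = (*) (2 * ((x t i - x t j) \<bullet> (v i - v j)))"
      by (auto simp: inner_commute algebra_simps)
    ultimately show ?thesis
      unfolding has_field_derivative_def power2_norm_eq_inner by simp
  qed
  then show ?thesis
    unfolding disagreement_def by (auto simp: sum_distrib_left intro!: DERIV_sum)
qed

lemma coupled_field_dissipates_disagreement:
  fixes f :: "real^'n \<Rightarrow> real^'n" and A :: "real^'n^'n" and y :: "nat \<Rightarrow> real^'n"
  assumes mono: "\<And>a b. (a - b) \<bullet> (f a - f b) \<le> - lam * norm (a - b) ^ 2"
    and "transpose A = A" "psd A"
    and perm: "bij_betw p {..<N} {..<N}"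
  defines "v \<equiv> \<lambda>i. f (y i) + A *v (y (p i) - y i)"
  shows "(\<Sum>i<N. \<Sum>j<N. (y i - y j) \<bullet> (v i - v j)) \<le> - lam * disagreement N y"
proof -
  define d where "d i j = y i - y j" for i j
  define Q where "Q u = u \<bullet> (A *v u)" for u
  have "(y i - y j) \<bullet> (v i - v j) \<le> (Q (d (p i) (p j)) - Q (d i j)) / 2 - lam * norm (d i j) ^ 2"
    for i j
  proof -
    have "(y i - y j) \<bullet> (v i - v j)
        = d i j \<bullet> (f (y i) - f (y j)) + d i j \<bullet> (A *v d (p i) (p j)) - Q (d i j)"
      unfolding v_def d_def Q_def
      by (simp add: matrix_vector_mult_diff_distrib inner_add_right inner_diff_right algebra_simps)
    moreover have "d i j \<bullet> (A *v d (p i) (p j)) \<le> (Q (d i j) + Q (d (p i) (p j))) / 2"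
      unfolding Q_def by (rule psd_symmetric_bilinear_le) fact+
    ultimately show ?thesis
      using mono[of "y i" "y j"] unfolding d_def by (simp add: field_simps)
  qed
  then have "(\<Sum>i<N. \<Sum>j<N. (y i - y j) \<bullet> (v i - v j))
      \<le> (\<Sum>i<N. \<Sum>j<N. (Q (d (p i) (p j)) - Q (d i j)) / 2 - lam * norm (d i j) ^ 2)"
    by (intro sum_mono)
  also have "\<dots> = ((\<Sum>i<N. \<Sum>j<N. Q (d (p i) (p j))) - (\<Sum>i<N. \<Sum>j<N. Q (d i j))) / 2
      - lam * disagreement N y"
    by (simp add: disagreement_def d_def sum_subtractf sum_divide_distrib[symmetric] sum_distrib_left)
  also have "\<dots> = - lam * disagreement N y"
    using sum_sum_reindex_bij_betw[OF perm, of "\<lambda>i j. Q (d i j)"] by simp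
  finally show ?thesis .
qed

lemma disagreement_exp_decay:
  fixes f :: "real^'n \<Rightarrow> real^'n" and A :: "real^'n^'n" and x :: "real \<Rightarrow> nat \<Rightarrow> real^'n"
  assumes mono: "\<And>a b. (a - b) \<bullet> (f a - f b) \<le> - lam * norm (a - b) ^ 2"
    and sym: "transpose A = A" and psd: "psd A"
    and perm: "bij_betw p {..<N} {..<N}"
    and ode: "\<And>i t. i < N \<Longrightarrow> t \<ge> 0 \<Longrightarrow> ((\<lambda>s. x s i) has_vector_derivative
                 (f (x t i) + A *v (x t (p i) - x t i))) (at t within {0..})"
    and "t \<ge> 0"
  shows "disagreement N (x t) \<le> disagreement N (x 0) * exp (- (2 * lam) * t)"
proof -
  define field where "field s i = f (x s i) + A *v (x s (p i) - x s i)" for s i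
  show ?thesis
  proof (rule exp_decay_if_derivative_le[OF _ _ \<open>t \<ge> 0\<close>])
    fix s :: real assume "s \<ge> 0"
    then show "((\<lambda>s. disagreement N (x s)) has_real_derivative
        2 * (\<Sum>i<N. \<Sum>j<N. (x s i - x s j) \<bullet> (field s i - field s j))) (at s within {0..})"
      unfolding field_def by (intro has_real_derivative_disagreement ode)
    show "2 * (\<Sum>i<N. \<Sum>j<N. (x s i - x s j) \<bullet> (field s i - field s j))
        \<le> - (2 * lam) * disagreement N (x s)"
      using coupled_field_dissipates_disagreement[OF mono sym psd perm, of "x s"]
      unfolding field_def by simp
  qed
qed

lemma exp_bound_from_sq_bound:
  assumes "u ^ 2 \<le> C * exp (- (2 * k) * t)" "u \<ge> 0"
  shows "u \<le> sqrt C * exp (- k * t)"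
proof -
  have "exp (- (2 * k) * t) = exp (- k * t) ^ 2"
    by (simp add: power2_eq_square exp_add[symmetric])
  then have "sqrt (u ^ 2) \<le> sqrt C * exp (- k * t)"
    using real_sqrt_le_mono[OF assms(1)] by (simp add: real_sqrt_mult)
  then show ?thesis
    using assms(2) by simp
qed

theorem corollary3p9:
  fixes f :: "real^'n \<Rightarrow> real^'n"
    and A :: "real^'n^'n"
    and N :: nat
    and lam :: real
    and x :: "real \<Rightarrow> nat \<Rightarrow> real^'n"
  assumes smooth: "smooth_map f"
    and N2: "N \<ge> 2"
    and symA: "transpose A = A"
    and posA: "pos_def A"
    and lam_pos: "lam > 0"
    and contr: "\<forall>z. loewner_le (sym_part (jacobian f z) + A) ((- lam) *\<^sub>R mat 1)"
    and ode: "\<forall>i<N. \<forall>t\<ge>0. ((\<lambda>s. x s i) has_vector_derivative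
                 (f (x t i) + A *v (x t ((i + N - 1) mod N) - x t i))) (at t within {0..})"
  shows "\<forall>i<N. \<forall>j<N. \<exists>c k. k > 0 \<and>
           (\<forall>t\<ge>0. norm (x t i - x t j) \<le> c * exp (- k * t))"
proof -
  have psdA: "psd A"
    using posA by (rule pos_def_imp_psd)
  have mono: "(a - b) \<bullet> (f a - f b) \<le> - lam * norm (a - b) ^ 2" for a b
    using smooth_map_differentiable[OF smooth] contr psdA
    by (intro strongly_monotone_if_loewner_le) auto
  have perm: "bij_betw (\<lambda>i. (i + N - 1) mod N) {..<N} {..<N}"
    using N2 by (intro bij_betw_cyclic_predecessor) simp
  have decay: "disagreement N (x t) \<le> disagreement N (x 0) * exp (- (2 * lam) * t)"
    if "t \<ge> 0" for t
    using ode that by (intro disagreement_exp_decay[OF mono symA psdA perm]) blast+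
  have "norm (x t i - x t j) \<le> sqrt (disagreement N (x 0)) * exp (- lam * t)"
    if "i < N" "j < N" "t \<ge> 0" for i j t
    using order_trans[OF norm_diff_sq_le_disagreement[OF that(1,2)] decay[OF that(3)]]
    by (rule exp_bound_from_sq_bound) simp
  then show ?thesis
    using lam_pos by blast
qed

end
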